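(* Let $U=A\boldsymbol\xi$, where $A=(a_{jk})$ is a real $p\times p$ matrix and $\boldsymbol\xi=(\xi_1,\dots,\xi_p)^T$ has i.i.d. entries with mean $0$, variance $1$ and finite fourth moment. Let $\Sigma=AA^T=(\sigma_{jk})$, $f=(\mathrm{tr}(\Sigma^2))^{1/2}$, $\nu=\mathrm{Var}(\xi_1^2)$. Let $\Gamma=(\gamma_{(i,j),(k,l)})$ be the $p^2\times p^2$ covariance matrix of the vector $W=(U_iU_j-\sigma_{ij})_{(i,j)\in\{1,\dots,p\}^2}$, i.e. $\gamma_{(i,j),(k,l)}=\mathrm{cov}(U_iU_j,U_kU_l)$. Then $$f_W^2:=\mathrm{tr}(\Gamma^2)=\sum_{a,b}\gamma_{ab}^2\ge\min(2,\nu^2/2)\,f^4.$$ *)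

theory Defs
  imports "HOL-Probability.Probability"
begin

definition (in prob_space) covariance :: "('a \<Rightarrow> real) \<Rightarrow> ('a \<Rightarrow> real) \<Rightarrow> real" where
  "covariance X Y = expectation (\<lambda>x. (X x - expectation X) * (Y x - expectation Y))"

end

theory Submission
  imports Defs "HOL-Library.Multiset"
begin

(* Expanding U = A xi and using independence, only the pairings of the four indices survive in
   E[xi_a xi_b xi_c xi_d], so
     gamma_(i,j),(k,l) = sigma_ik sigma_jl + sigma_il sigma_jk + (nu - 2) sum_m a_im a_jm a_km a_lm.
   This matrix is a sum over pairs r = (m,n) of rank-one matrices Y_r Y_r^T, where
   Y_r = a_m (x) a_n + a_n (x) a_m is built from the columns of A, with weight nu/4 if m = n and 1/2
   otherwise.  The squared Frobenius norm of such a sum is sum_{r,s} w_r w_s <Y_r, Y_s>^2, hence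
   monotone in nonnegative weights, so tr(Gamma^2) >= (min nu 2 / 4)^2 tr(S^2) for the unweighted
   sum S = 2 (Sigma (x) Sigma)(I + K), K the swap of tensor factors.  Finally
   tr(S^2) = 8 (tr Sigma^2)^2 + 8 tr Sigma^4 >= 8 f^4. *)

section \<open>Moments of an independent standardized family\<close>

lemma abs_power_le_one_plus_power:
  fixes x :: real
  assumes "c \<le> n"
  shows "\<bar>x\<bar> ^ c \<le> 1 + \<bar>x\<bar> ^ n"
proof (cases "\<bar>x\<bar> \<le> 1")
  case True
  then show ?thesis by (simp add: power_le_one add_increasing2)
next
  case False
  then show ?thesis using assms by (simp add: add_increasing power_increasing)
qed

lemma (in prob_space) integrable_power_le:
  fixes X :: "'a \<Rightarrow> real"
  assumes "random_variable borel X" "integrable M (\<lambda>x. X x ^ n)" "even n" "c \<le> n"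
  shows "integrable M (\<lambda>x. X x ^ c)"
proof (rule Bochner_Integration.integrable_bound[where f = "\<lambda>x. 1 + X x ^ n"])
  show "integrable M (\<lambda>x. 1 + X x ^ n)" using assms(2) by simp
  show "(\<lambda>x. X x ^ c) \<in> borel_measurable M" using assms(1) by measurable
  show "AE x in M. norm (X x ^ c) \<le> norm (1 + X x ^ n)"
    using abs_power_le_one_plus_power[OF \<open>c \<le> n\<close>] \<open>even n\<close>
    by (simp add: power_abs power_even_abs zero_le_even_power add_increasing)
qed

lemma (in prob_space) expectation_eq_if_distr_eq:
  fixes X Y :: "'a \<Rightarrow> real" and g :: "real \<Rightarrow> real"
  assumes "random_variable borel X" "random_variable borel Y" "distr M borel X = distr M borel Y"
    and "g \<in> borel_measurable borel"
  shows "expectation (\<lambda>x. g (X x)) = expectation (\<lambda>x. g (Y x))"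
  using assms by (metis integral_distr)

lemma (in prob_space) covariance_eq:
  fixes X Y :: "'a \<Rightarrow> real"
  assumes "integrable M X" "integrable M Y" "integrable M (\<lambda>x. X x * Y x)"
  shows "covariance X Y = expectation (\<lambda>x. X x * Y x) - expectation X * expectation Y"
proof -
  have "(\<lambda>x. (X x - expectation X) * (Y x - expectation Y))
      = (\<lambda>x. X x * Y x - expectation Y * X x - expectation X * Y x + expectation X * expectation Y)"
    by (auto simp: algebra_simps)
  then show ?thesis
    unfolding covariance_def using assms prob_space by (simp add: integral_diff)
qed

lemma prod_count_mset2:
  fixes g :: "nat \<Rightarrow> nat \<Rightarrow> real"
  assumes "\<And>k. k \<in> {a, b} \<Longrightarrow> g k 1 = 0" and "\<And>k. k \<in> {a, b} \<Longrightarrow> g k 2 = 1"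
  shows "(\<Prod>k\<in>set_mset {#a, b#}. g k (count {#a, b#} k)) = of_bool (a = b)"
  using assms by (cases "a = b") (simp_all add: numeral_2_eq_2)

(* No hypothesis on g k 3 is needed: a count 3 comes with a count 1, whose factor vanishes. *)
lemma prod_count_mset4:
  fixes g :: "nat \<Rightarrow> nat \<Rightarrow> real"
  assumes "\<And>k. k \<in> {a, b, c, d} \<Longrightarrow> g k 1 = 0" and "\<And>k. k \<in> {a, b, c, d} \<Longrightarrow> g k 2 = 1"
    and "\<And>k. k \<in> {a, b, c, d} \<Longrightarrow> g k 4 = \<mu>"
  shows "(\<Prod>k\<in>set_mset {#a, b, c, d#}. g k (count {#a, b, c, d#} k)) =
    of_bool (a = b) * of_bool (c = d) + of_bool (a = c) * of_bool (b = d)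
    + of_bool (a = d) * of_bool (b = c)
    + (\<mu> - 3) * (of_bool (a = b) * of_bool (a = c) * of_bool (a = d))"
proof -
  have g: "g k (Suc 0) = 0" "g k (Suc (Suc 0)) = 1" "g k (Suc (Suc (Suc (Suc 0)))) = \<mu>"
    if "k \<in> {a, b, c, d}" for k
    using assms that by (simp_all add: numeral_eq_Suc)
  show ?thesis
    by (cases "a = b"; cases "a = c"; cases "a = d"; cases "b = c"; cases "b = d"; cases "c = d")
       (simp_all add: g insert_commute)
qed

lemma sum_if_const_cond:
  "(\<Sum>x\<in>A. if P then f x else 0) = (if P then sum f A else (0::'b::comm_monoid_add))"
  by simp

lemmas of_bool_contract_simps =
  of_bool_def if_distrib[of "\<lambda>x. _ * x"] if_distrib[of "\<lambda>x. x * _"] sum_if_const_cond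

lemma sum_of_bool_pairing2:
  fixes u v :: "nat \<Rightarrow> real"
  shows "(\<Sum>a<p. \<Sum>b<p. u a * v b * of_bool (a = b)) = (\<Sum>a<p. u a * v a)"
  by (simp add: of_bool_contract_simps cong: if_cong)

lemma sum_of_bool_pairing4:
  fixes u v w t :: "nat \<Rightarrow> real"
  shows "(\<Sum>a<p. \<Sum>b<p. \<Sum>c<p. \<Sum>d<p. u a * v b * w c * t d *
      (of_bool (a = b) * of_bool (c = d) + of_bool (a = c) * of_bool (b = d)
       + of_bool (a = d) * of_bool (b = c) + \<kappa> * (of_bool (a = b) * of_bool (a = c) * of_bool (a = d))))
    = (\<Sum>a<p. u a * v a) * (\<Sum>a<p. w a * t a) + (\<Sum>a<p. u a * w a) * (\<Sum>a<p. v a * t a)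
      + (\<Sum>a<p. u a * t a) * (\<Sum>a<p. v a * w a) + \<kappa> * (\<Sum>a<p. u a * v a * w a * t a)"
proof -
  have ab_cd: "(\<Sum>a<p. \<Sum>b<p. \<Sum>c<p. \<Sum>d<p. u a * v b * w c * t d * (of_bool (a = b) * of_bool (c = d)))
      = (\<Sum>a<p. u a * v a) * (\<Sum>a<p. w a * t a)"
    by (simp add: of_bool_contract_simps sum_distrib_left sum_distrib_right mult_ac cong: if_cong)
  have ac_bd: "(\<Sum>a<p. \<Sum>b<p. \<Sum>c<p. \<Sum>d<p. u a * v b * w c * t d * (of_bool (a = c) * of_bool (b = d)))
      = (\<Sum>a<p. u a * w a) * (\<Sum>a<p. v a * t a)"
    by (simp add: of_bool_contract_simps sum_distrib_left sum_distrib_right mult_ac cong: if_cong)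
  have ad_bc: "(\<Sum>a<p. \<Sum>b<p. \<Sum>c<p. \<Sum>d<p. u a * v b * w c * t d * (of_bool (a = d) * of_bool (b = c)))
      = (\<Sum>a<p. u a * t a) * (\<Sum>a<p. v a * w a)"
    by (simp add: of_bool_contract_simps sum_distrib_left sum_distrib_right mult_ac cong: if_cong)
      (rule sum.swap)
  have diag: "(\<Sum>a<p. \<Sum>b<p. \<Sum>c<p. \<Sum>d<p. u a * v b * w c * t d *
      (\<kappa> * (of_bool (a = b) * of_bool (a = c) * of_bool (a = d)))) = \<kappa> * (\<Sum>a<p. u a * v a * w a * t a)"
    by (simp add: of_bool_contract_simps sum_distrib_left mult_ac cong: if_cong)
  show ?thesis
    by (simp add: distrib_left sum.distrib ab_cd ac_bd ad_bc diag flip: sum_distrib_left)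
qed

locale standardized_indep_family = prob_space +
  fixes p :: nat and \<xi> :: "nat \<Rightarrow> 'a \<Rightarrow> real" and \<mu>\<^sub>4 :: real
  assumes random_variable: "\<And>k. k < p \<Longrightarrow> random_variable borel (\<xi> k)"
    and indep: "indep_vars (\<lambda>_. borel) \<xi> {..<p}"
    and integrable_fourth: "\<And>k. k < p \<Longrightarrow> integrable M (\<lambda>x. \<xi> k x ^ 4)"
    and mean_zero: "\<And>k. k < p \<Longrightarrow> expectation (\<xi> k) = 0"
    and second_moment: "\<And>k. k < p \<Longrightarrow> expectation (\<lambda>x. \<xi> k x ^ 2) = 1"
    and fourth_moment: "\<And>k. k < p \<Longrightarrow> expectation (\<lambda>x. \<xi> k x ^ 4) = \<mu>\<^sub>4"
begin

lemma integrable_power: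
  "k < p \<Longrightarrow> c \<le> 4 \<Longrightarrow> integrable M (\<lambda>x. \<xi> k x ^ c)"
  by (rule integrable_power_le[OF random_variable integrable_fourth]) auto

lemma integrable_expectation_prod_mset:
  assumes K: "set_mset K \<subseteq> {..<p}" and "size K \<le> 4"
  shows "integrable M (\<lambda>x. \<Prod>k\<in>#K. \<xi> k x)"
    and "expectation (\<lambda>x. \<Prod>k\<in>#K. \<xi> k x) = (\<Prod>k\<in>set_mset K. expectation (\<lambda>x. \<xi> k x ^ count K k))"
proof -
  have prod_eq: "(\<Prod>k\<in>#K. \<xi> k x) = (\<Prod>k\<in>set_mset K. \<xi> k x ^ count K k)" for x
    by (simp add: image_prod_mset_multiplicity)
  have "indep_vars (\<lambda>_. borel) (\<lambda>k x. \<xi> k x ^ count K k) {..<p}"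
    by (rule indep_vars_compose2[OF indep]) simp
  then have I: "indep_vars (\<lambda>_. borel) (\<lambda>k x. \<xi> k x ^ count K k) (set_mset K)"
    using K by (rule indep_vars_subset)
  have int: "integrable M (\<lambda>x. \<xi> k x ^ count K k)" if "k \<in> set_mset K" for k
    using that K \<open>size K \<le> 4\<close> count_le_size[of K k] by (intro integrable_power) auto
  show "integrable M (\<lambda>x. \<Prod>k\<in>#K. \<xi> k x)"
    unfolding prod_eq by (rule indep_vars_integrable[OF finite_set_mset I int])
  show "expectation (\<lambda>x. \<Prod>k\<in>#K. \<xi> k x) = (\<Prod>k\<in>set_mset K. expectation (\<lambda>x. \<xi> k x ^ count K k))"
    unfolding prod_eq by (rule indep_vars_lebesgue_integral[OF finite_set_mset I int])
qed

lemma integrable_expectation_mult2: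
  assumes "a < p" "b < p"
  shows "integrable M (\<lambda>x. \<xi> a x * \<xi> b x)"
    and "expectation (\<lambda>x. \<xi> a x * \<xi> b x) = of_bool (a = b)"
proof -
  note K = integrable_expectation_prod_mset[of "{#a, b#}"]
  show "integrable M (\<lambda>x. \<xi> a x * \<xi> b x)" using K(1) assms by simp
  have "expectation (\<lambda>x. \<xi> a x * \<xi> b x) = (\<Prod>k\<in>set_mset {#a, b#}. expectation (\<lambda>x. \<xi> k x ^ count {#a, b#} k))"
    using K(2) assms by simp
  also have "\<dots> = of_bool (a = b)"
    using assms by (intro prod_count_mset2) (auto simp: mean_zero second_moment)
  finally show "expectation (\<lambda>x. \<xi> a x * \<xi> b x) = of_bool (a = b)" .
qed

lemma integrable_expectation_mult4:
  assumes "a < p" "b < p" "c < p" "d < p"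
  shows "integrable M (\<lambda>x. \<xi> a x * \<xi> b x * \<xi> c x * \<xi> d x)"
    and "expectation (\<lambda>x. \<xi> a x * \<xi> b x * \<xi> c x * \<xi> d x) =
      of_bool (a = b) * of_bool (c = d) + of_bool (a = c) * of_bool (b = d)
      + of_bool (a = d) * of_bool (b = c)
      + (\<mu>\<^sub>4 - 3) * (of_bool (a = b) * of_bool (a = c) * of_bool (a = d))"
proof -
  note K = integrable_expectation_prod_mset[of "{#a, b, c, d#}"]
  show "integrable M (\<lambda>x. \<xi> a x * \<xi> b x * \<xi> c x * \<xi> d x)"
    using K(1) assms by (simp add: mult.assoc)
  have "expectation (\<lambda>x. \<xi> a x * \<xi> b x * \<xi> c x * \<xi> d x)
      = (\<Prod>k\<in>set_mset {#a, b, c, d#}. expectation (\<lambda>x. \<xi> k x ^ count {#a, b, c, d#} k))"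
    using K(2) assms by (simp add: mult.assoc)
  also have "\<dots> = of_bool (a = b) * of_bool (c = d) + of_bool (a = c) * of_bool (b = d)
      + of_bool (a = d) * of_bool (b = c)
      + (\<mu>\<^sub>4 - 3) * (of_bool (a = b) * of_bool (a = c) * of_bool (a = d))"
    using assms by (intro prod_count_mset4) (auto simp: mean_zero second_moment fourth_moment)
  finally show "expectation (\<lambda>x. \<xi> a x * \<xi> b x * \<xi> c x * \<xi> d x) = \<dots>" .
qed

(* Stated with i < p rather than i \<in> {..<p}: inside nested sums the simplifier cannot turn a
   membership premise into the side condition a < p of the moment lemmas. *)
lemmas integrable_sum_lessThan = Bochner_Integration.integrable_sum[where I = "{..<p}", simplified]
lemmas integral_sum_lessThan = Bochner_Integration.integral_sum[where I = "{..<p}", simplified]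

lemma sum_linear_form_mult:
  fixes u v :: "nat \<Rightarrow> real"
  shows "(\<Sum>a<p. u a * \<xi> a x) * (\<Sum>b<p. v b * \<xi> b x)
      = (\<Sum>a<p. \<Sum>b<p. u a * v b * (\<xi> a x * \<xi> b x))"
  by (simp add: sum_product mult_ac)

lemma integrable_expectation_linear_forms2:
  "integrable M (\<lambda>x. (\<Sum>a<p. u a * \<xi> a x) * (\<Sum>b<p. v b * \<xi> b x))"
  "expectation (\<lambda>x. (\<Sum>a<p. u a * \<xi> a x) * (\<Sum>b<p. v b * \<xi> b x)) = (\<Sum>a<p. u a * v a)"
  by (simp_all add: sum_linear_form_mult integrable_expectation_mult2
      integrable_sum_lessThan integral_sum_lessThan sum_of_bool_pairing2)

lemma integrable_expectation_linear_forms4: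
  "integrable M (\<lambda>x. (\<Sum>a<p. u a * \<xi> a x) * (\<Sum>b<p. v b * \<xi> b x) *
      ((\<Sum>c<p. w c * \<xi> c x) * (\<Sum>d<p. t d * \<xi> d x)))"
  "expectation (\<lambda>x. (\<Sum>a<p. u a * \<xi> a x) * (\<Sum>b<p. v b * \<xi> b x) *
      ((\<Sum>c<p. w c * \<xi> c x) * (\<Sum>d<p. t d * \<xi> d x)))
    = (\<Sum>a<p. u a * v a) * (\<Sum>a<p. w a * t a) + (\<Sum>a<p. u a * w a) * (\<Sum>a<p. v a * t a)
      + (\<Sum>a<p. u a * t a) * (\<Sum>a<p. v a * w a) + (\<mu>\<^sub>4 - 3) * (\<Sum>a<p. u a * v a * w a * t a)"
    (is "_ = ?moment")
proof -
  have expand: "(\<Sum>a<p. u a * \<xi> a x) * (\<Sum>b<p. v b * \<xi> b x) *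
      ((\<Sum>c<p. w c * \<xi> c x) * (\<Sum>d<p. t d * \<xi> d x))
      = (\<Sum>a<p. \<Sum>b<p. \<Sum>c<p. \<Sum>d<p. u a * v b * w c * t d * (\<xi> a x * \<xi> b x * \<xi> c x * \<xi> d x))" for x
    unfolding sum_linear_form_mult by (simp only: sum_distrib_right) (simp add: sum_distrib_left mult_ac)
  show "integrable M (\<lambda>x. (\<Sum>a<p. u a * \<xi> a x) * (\<Sum>b<p. v b * \<xi> b x) *
      ((\<Sum>c<p. w c * \<xi> c x) * (\<Sum>d<p. t d * \<xi> d x)))"
    unfolding expand by (simp add: integrable_expectation_mult4 integrable_sum_lessThan)
  show "expectation (\<lambda>x. (\<Sum>a<p. u a * \<xi> a x) * (\<Sum>b<p. v b * \<xi> b x) *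
      ((\<Sum>c<p. w c * \<xi> c x) * (\<Sum>d<p. t d * \<xi> d x))) = ?moment"
    unfolding expand sum_of_bool_pairing4[symmetric]
    by (simp add: integrable_expectation_mult4 integrable_sum_lessThan integral_sum_lessThan
        del: of_bool_eq_1_iff)
qed

lemma covariance_linear_form_products:
  "covariance (\<lambda>x. (\<Sum>a<p. u a * \<xi> a x) * (\<Sum>b<p. v b * \<xi> b x))
      (\<lambda>x. (\<Sum>c<p. w c * \<xi> c x) * (\<Sum>d<p. t d * \<xi> d x))
    = (\<Sum>a<p. u a * w a) * (\<Sum>a<p. v a * t a) + (\<Sum>a<p. u a * t a) * (\<Sum>a<p. v a * w a)
      + (\<mu>\<^sub>4 - 3) * (\<Sum>a<p. u a * v a * w a * t a)"
  by (simp add: covariance_eq integrable_expectation_linear_forms2 integrable_expectation_linear_forms4)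

lemma variance_square:
  assumes "k < p"
  shows "variance (\<lambda>x. (\<xi> k x)\<^sup>2) = \<mu>\<^sub>4 - 1"
proof -
  have "(\<lambda>x. ((\<xi> k x)\<^sup>2 - 1)\<^sup>2) = (\<lambda>x. \<xi> k x ^ 4 - 2 * (\<xi> k x)\<^sup>2 + 1)"
    by (simp add: power2_eq_square algebra_simps numeral_eq_Suc)
  then show ?thesis
    using assms integrable_power[of k 2] integrable_fourth[of k]
    by (simp add: second_moment fourth_moment prob_space)
qed

end

section \<open>Squared Frobenius norms of sums of outer products\<close>

definition gram :: "nat \<Rightarrow> (nat \<Rightarrow> nat \<Rightarrow> real) \<Rightarrow> nat \<Rightarrow> nat \<Rightarrow> real" where
  "gram p A j k = (\<Sum>l<p. A j l * A k l)"

lemma sum_swap_pairs: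
  "(\<Sum>a\<in>A. \<Sum>b\<in>B. \<Sum>c\<in>C. \<Sum>d\<in>D. f a b c d) = (\<Sum>c\<in>C. \<Sum>d\<in>D. \<Sum>a\<in>A. \<Sum>b\<in>B. f a b c d)"
proof -
  have "(\<Sum>a\<in>A. \<Sum>b\<in>B. \<Sum>c\<in>C. \<Sum>d\<in>D. f a b c d) = (\<Sum>a\<in>A. \<Sum>c\<in>C. \<Sum>b\<in>B. \<Sum>d\<in>D. f a b c d)"
    by (intro sum.cong refl) (rule sum.swap)
  also have "\<dots> = (\<Sum>c\<in>C. \<Sum>a\<in>A. \<Sum>d\<in>D. \<Sum>b\<in>B. f a b c d)"
    by (subst sum.swap) (intro sum.cong refl, rule sum.swap)
  also have "\<dots> = (\<Sum>c\<in>C. \<Sum>d\<in>D. \<Sum>a\<in>A. \<Sum>b\<in>B. f a b c d)"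
    by (intro sum.cong refl) (rule sum.swap)
  finally show ?thesis .
qed

lemma sum_sq_outer_products_eq:
  fixes w :: "'r \<Rightarrow> real" and Y :: "'r \<Rightarrow> 'i \<Rightarrow> real"
  shows "(\<Sum>a\<in>I. \<Sum>b\<in>I. (\<Sum>r\<in>R. w r * Y r a * Y r b)\<^sup>2)
       = (\<Sum>r\<in>R. \<Sum>s\<in>R. w r * w s * (\<Sum>a\<in>I. Y r a * Y s a)\<^sup>2)"
proof -
  have "(\<Sum>a\<in>I. \<Sum>b\<in>I. (\<Sum>r\<in>R. w r * Y r a * Y r b)\<^sup>2)
      = (\<Sum>a\<in>I. \<Sum>b\<in>I. \<Sum>r\<in>R. \<Sum>s\<in>R. w r * w s * (Y r a * Y s a) * (Y r b * Y s b))"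
    by (simp add: power2_eq_square sum_product mult_ac)
  also have "\<dots> = (\<Sum>r\<in>R. \<Sum>s\<in>R. \<Sum>a\<in>I. \<Sum>b\<in>I. w r * w s * (Y r a * Y s a) * (Y r b * Y s b))"
    by (rule sum_swap_pairs)
  also have "\<dots> = (\<Sum>r\<in>R. \<Sum>s\<in>R. w r * w s * (\<Sum>a\<in>I. Y r a * Y s a)\<^sup>2)"
    by (simp add: power2_eq_square sum_product sum_distrib_left mult_ac)
  finally show ?thesis .
qed

lemma sum_sq_outer_products_ge:
  fixes w :: "'r \<Rightarrow> real" and Y :: "'r \<Rightarrow> 'i \<Rightarrow> real"
  assumes "0 \<le> c" and "\<And>r. r \<in> R \<Longrightarrow> c \<le> w r"
  shows "(\<Sum>a\<in>I. \<Sum>b\<in>I. (\<Sum>r\<in>R. w r * Y r a * Y r b)\<^sup>2)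
       \<ge> c\<^sup>2 * (\<Sum>a\<in>I. \<Sum>b\<in>I. (\<Sum>r\<in>R. Y r a * Y r b)\<^sup>2)"
proof -
  have unweighted: "(\<Sum>a\<in>I. \<Sum>b\<in>I. (\<Sum>r\<in>R. Y r a * Y r b)\<^sup>2)
      = (\<Sum>r\<in>R. \<Sum>s\<in>R. (\<Sum>a\<in>I. Y r a * Y s a)\<^sup>2)"
    using sum_sq_outer_products_eq[where w = "\<lambda>_. 1" and Y = Y and I = I and R = R] by simp
  show ?thesis
    unfolding sum_sq_outer_products_eq[where w = w and Y = Y and I = I and R = R] unweighted sum_distrib_left
  proof (intro sum_mono)
    fix r s assume "r \<in> R" "s \<in> R"
    then have "c * c \<le> w r * w s" using assms by (meson mult_mono order_trans)
    then show "c\<^sup>2 * (\<Sum>a\<in>I. Y r a * Y s a)\<^sup>2 \<le> w r * w s * (\<Sum>a\<in>I. Y r a * Y s a)\<^sup>2"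
      by (simp add: power2_eq_square mult_right_mono)
  qed
qed

lemma sum_sym_outer_products:
  "(\<Sum>r\<in>{..<p} \<times> {..<p}. (A i (fst r) * A j (snd r) + A i (snd r) * A j (fst r)) *
      (A k (fst r) * A l (snd r) + A k (snd r) * A l (fst r)))
    = 2 * (gram p A i k * gram p A j l + gram p A i l * gram p A j k)"
proof -
  have "(\<Sum>r\<in>{..<p} \<times> {..<p}. (A i (fst r) * A j (snd r) + A i (snd r) * A j (fst r)) *
      (A k (fst r) * A l (snd r) + A k (snd r) * A l (fst r)))
    = (\<Sum>m<p. \<Sum>n<p. A i m * A k m * (A j n * A l n)) + (\<Sum>m<p. \<Sum>n<p. A i m * A l m * (A j n * A k n))
      + (\<Sum>m<p. \<Sum>n<p. A i n * A l n * (A j m * A k m)) + (\<Sum>m<p. \<Sum>n<p. A i n * A k n * (A j m * A l m))"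
    by (simp add: sum.cartesian_product' sum.distrib algebra_simps)
  also have "\<dots> = 2 * (gram p A i k * gram p A j l + gram p A i l * gram p A j k)"
  proof -
    have "(\<Sum>m<p. \<Sum>n<p. A i n * A l n * (A j m * A k m)) = gram p A i l * gram p A j k"
      "(\<Sum>m<p. \<Sum>n<p. A i n * A k n * (A j m * A l m)) = gram p A i k * gram p A j l"
      by (subst sum.swap, simp add: gram_def sum_product)+
    then show ?thesis by (simp add: gram_def sum_product)
  qed
  finally show ?thesis .
qed

lemma sum_weighted_sym_outer_products:
  "(\<Sum>r\<in>{..<p} \<times> {..<p}. (if fst r = snd r then \<nu> / 4 else 1 / 2) *
      (A i (fst r) * A j (snd r) + A i (snd r) * A j (fst r)) *
      (A k (fst r) * A l (snd r) + A k (snd r) * A l (fst r)))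
    = gram p A i k * gram p A j l + gram p A i l * gram p A j k
      + (\<nu> - 2) * (\<Sum>m<p. A i m * A j m * A k m * A l m)"
proof -
  let ?Y = "\<lambda>r. (A i (fst r) * A j (snd r) + A i (snd r) * A j (fst r)) *
      (A k (fst r) * A l (snd r) + A k (snd r) * A l (fst r))"
  have "(\<Sum>r\<in>{..<p} \<times> {..<p}. (if fst r = snd r then \<nu> / 4 else 1 / 2) * ?Y r)
      = (\<Sum>r\<in>{..<p} \<times> {..<p}. 1 / 2 * ?Y r + (if fst r = snd r then (\<nu> - 2) / 4 * ?Y r else 0))"
    by (rule sum.cong) (auto simp: field_simps)
  also have "\<dots> = 1 / 2 * (\<Sum>r\<in>{..<p} \<times> {..<p}. ?Y r) + (\<Sum>m<p. (\<nu> - 2) / 4 * ?Y (m, m))"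
    by (simp add: sum.distrib sum_distrib_left sum.cartesian_product')
  also have "\<dots> = gram p A i k * gram p A j l + gram p A i l * gram p A j k
      + (\<nu> - 2) * (\<Sum>m<p. A i m * A j m * A k m * A l m)"
  proof -
    have "?Y (m, m) = 4 * (A i m * A j m * A k m * A l m)" for m
      by (simp add: algebra_simps)
    then show ?thesis
      unfolding sum_sym_outer_products by (simp add: sum_distrib_left mult.assoc)
  qed
  finally show ?thesis by (simp only: mult.assoc)
qed

lemma sum_sq_sym_kronecker_ge:
  fixes s :: "nat \<Rightarrow> nat \<Rightarrow> real"
  shows "(\<Sum>a\<in>{..<p} \<times> {..<p}. \<Sum>b\<in>{..<p} \<times> {..<p}.
           (2 * (s (fst a) (fst b) * s (snd a) (snd b) + s (fst a) (snd b) * s (snd a) (fst b)))\<^sup>2)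
        \<ge> 8 * (\<Sum>j<p. \<Sum>k<p. (s j k)\<^sup>2)\<^sup>2"
proof -
  define F where "F = (\<Sum>j<p. \<Sum>k<p. (s j k)\<^sup>2)"
  have direct: "(\<Sum>i<p. \<Sum>j<p. \<Sum>k<p. \<Sum>l<p. (s i k * s j l)\<^sup>2) = F\<^sup>2"
    unfolding F_def power2_eq_square sum_product by (simp add: mult_ac)
  have crossed: "(\<Sum>i<p. \<Sum>j<p. \<Sum>k<p. \<Sum>l<p. (s i l * s j k)\<^sup>2) = F\<^sup>2"
  proof -
    have "(\<Sum>i<p. \<Sum>j<p. \<Sum>k<p. \<Sum>l<p. (s i l * s j k)\<^sup>2)
        = (\<Sum>i<p. \<Sum>j<p. \<Sum>l<p. \<Sum>k<p. (s i l * s j k)\<^sup>2)"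
      by (rule sum.cong[OF refl], rule sum.cong[OF refl], rule sum.swap)
    also note direct
    finally show ?thesis .
  qed
  have mixed: "(\<Sum>i<p. \<Sum>j<p. \<Sum>k<p. \<Sum>l<p. s i k * s j l * (s i l * s j k))
      = (\<Sum>i<p. \<Sum>j<p. (\<Sum>k<p. s i k * s j k)\<^sup>2)"
    by (simp add: power2_eq_square sum_product mult_ac)
  have "(\<Sum>a\<in>{..<p} \<times> {..<p}. \<Sum>b\<in>{..<p} \<times> {..<p}.
           (2 * (s (fst a) (fst b) * s (snd a) (snd b) + s (fst a) (snd b) * s (snd a) (fst b)))\<^sup>2)
     = 4 * (\<Sum>i<p. \<Sum>j<p. \<Sum>k<p. \<Sum>l<p. (s i k * s j l)\<^sup>2)
       + 4 * (\<Sum>i<p. \<Sum>j<p. \<Sum>k<p. \<Sum>l<p. (s i l * s j k)\<^sup>2)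
       + 8 * (\<Sum>i<p. \<Sum>j<p. \<Sum>k<p. \<Sum>l<p. s i k * s j l * (s i l * s j k))"
    by (simp add: sum.cartesian_product' power2_eq_square sum.distrib sum_distrib_left algebra_simps)
  moreover have "(\<Sum>i<p. \<Sum>j<p. (\<Sum>k<p. s i k * s j k)\<^sup>2) \<ge> 0"
    by (intro sum_nonneg) simp
  ultimately show ?thesis
    using direct crossed mixed by (simp add: F_def)
qed

lemma eight_mult_sq_min_div_four:
  fixes \<nu> :: real
  assumes "0 \<le> \<nu>"
  shows "8 * (min \<nu> 2 / 4)\<^sup>2 = min 2 (\<nu>\<^sup>2 / 2)"
proof (cases "\<nu> \<le> 2")
  case True
  then have "\<nu>\<^sup>2 \<le> 2\<^sup>2" using assms by (intro power_mono)
  with True show ?thesis by (simp add: min_def power_divide)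
next
  case False
  then have "2\<^sup>2 \<le> \<nu>\<^sup>2" by (intro power_mono) auto
  with False show ?thesis by (simp add: min_def power2_eq_square)
qed

lemma sum_sq_fourth_order_covariance_ge:
  fixes A :: "nat \<Rightarrow> nat \<Rightarrow> real"
  assumes "0 \<le> \<nu>"
  shows "(\<Sum>a\<in>{..<p} \<times> {..<p}. \<Sum>b\<in>{..<p} \<times> {..<p}.
      (gram p A (fst a) (fst b) * gram p A (snd a) (snd b) + gram p A (fst a) (snd b) * gram p A (snd a) (fst b)
       + (\<nu> - 2) * (\<Sum>m<p. A (fst a) m * A (snd a) m * A (fst b) m * A (snd b) m))\<^sup>2)
    \<ge> min 2 (\<nu>\<^sup>2 / 2) * (\<Sum>j<p. \<Sum>k<p. (gram p A j k)\<^sup>2)\<^sup>2"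
    (is "(\<Sum>a\<in>?P. \<Sum>b\<in>?P. (?\<Gamma> a b)\<^sup>2) \<ge> _")
proof -
  define w where "w r = (if fst r = snd r then \<nu> / 4 else 1 / 2)" for r :: "nat \<times> nat"
  define Y where "Y r a = A (fst a) (fst r) * A (snd a) (snd r) + A (fst a) (snd r) * A (snd a) (fst r)"
    for r a :: "nat \<times> nat"
  define c where "c = min \<nu> 2 / 4"
  have \<Gamma>_eq: "?\<Gamma> a b = (\<Sum>r\<in>?P. w r * Y r a * Y r b)" for a b
    using sum_weighted_sym_outer_products[of \<nu> A "fst a" "snd a" "fst b" "snd b" p]
    by (simp add: w_def Y_def mult.assoc)
  have Y_gram: "(\<Sum>r\<in>?P. Y r a * Y r b)
      = 2 * (gram p A (fst a) (fst b) * gram p A (snd a) (snd b) + gram p A (fst a) (snd b) * gram p A (snd a) (fst b))"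
    for a b
    unfolding Y_def by (rule sum_sym_outer_products)
  have "min 2 (\<nu>\<^sup>2 / 2) * (\<Sum>j<p. \<Sum>k<p. (gram p A j k)\<^sup>2)\<^sup>2
      = c\<^sup>2 * (8 * (\<Sum>j<p. \<Sum>k<p. (gram p A j k)\<^sup>2)\<^sup>2)"
    using eight_mult_sq_min_div_four[OF assms] by (simp add: c_def)
  also have "\<dots> \<le> c\<^sup>2 * (\<Sum>a\<in>?P. \<Sum>b\<in>?P. (\<Sum>r\<in>?P. Y r a * Y r b)\<^sup>2)"
    unfolding Y_gram by (intro mult_left_mono sum_sq_sym_kronecker_ge) simp
  also have "\<dots> \<le> (\<Sum>a\<in>?P. \<Sum>b\<in>?P. (\<Sum>r\<in>?P. w r * Y r a * Y r b)\<^sup>2)"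
    using assms by (intro sum_sq_outer_products_ge) (auto simp: c_def w_def)
  finally show ?thesis by (simp add: \<Gamma>_eq)
qed

theorem mainTheorem10:
  fixes M :: "'a measure" and p :: nat and A :: "nat \<Rightarrow> nat \<Rightarrow> real"
    and \<xi> :: "nat \<Rightarrow> 'a \<Rightarrow> real" and U :: "nat \<Rightarrow> 'a \<Rightarrow> real"
    and \<sigma> :: "nat \<Rightarrow> nat \<Rightarrow> real" and f \<nu> :: real
    and \<gamma> :: "nat \<times> nat \<Rightarrow> nat \<times> nat \<Rightarrow> real"
  assumes "prob_space M"
    and meas: "\<And>k. k < p \<Longrightarrow> \<xi> k \<in> borel_measurable M"
    and indep: "prob_space.indep_vars M (\<lambda>_. borel) \<xi> {..<p}"
    and ident: "\<And>k. k < p \<Longrightarrow> distr M borel (\<xi> k) = distr M borel (\<xi> 0)"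
    and fourth: "\<And>k. k < p \<Longrightarrow> integrable M (\<lambda>x. (\<xi> k x) ^ 4)"
    and mean0: "\<And>k. k < p \<Longrightarrow> prob_space.expectation M (\<xi> k) = 0"
    and var1: "\<And>k. k < p \<Longrightarrow> prob_space.variance M (\<xi> k) = 1"
    and U_def: "U = (\<lambda>i x. \<Sum>k<p. A i k * \<xi> k x)"
    and \<sigma>_def: "\<sigma> =  (\<lambda>j k. \<Sum>l<p. A j l * A k l)"
    and f_def: "f =  sqrt (\<Sum>j<p. \<Sum>k<p. (\<sigma> j k)\<^sup>2)"
    and \<nu>_def: "\<nu> =  prob_space.variance M (\<lambda>x. (\<xi> 0 x)\<^sup>2)"
    and \<gamma>_def: "\<gamma> =  (\<lambda>(i, j) (k, l). prob_space.covariance M (\<lambda>x. U i x * U j x) (\<lambda>x. U k x * U l x))"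
  shows "(\<Sum>a\<in>{..<p} \<times> {..<p}. \<Sum>b\<in>{..<p} \<times> {..<p}. (\<gamma> a b)\<^sup>2) \<ge> min 2 (\<nu>\<^sup>2 / 2) * f ^ 4"
proof -
  interpret prob_space M by fact
  show ?thesis
  proof (cases "p = 0")
    case True
    then show ?thesis by (simp add: f_def)
  next
    case False
    define \<mu>\<^sub>4 where "\<mu>\<^sub>4 = expectation (\<lambda>x. \<xi> 0 x ^ 4)"
    have fourth_moment: "expectation (\<lambda>x. \<xi> k x ^ 4) = \<mu>\<^sub>4" if "k < p" for k
      unfolding \<mu>\<^sub>4_def using meas[OF that] meas[of 0] ident[OF that] False
      by (intro expectation_eq_if_distr_eq) auto
    interpret standardized_indep_family M p \<xi> \<mu>\<^sub>4
      using meas indep fourth mean0 var1 fourth_moment by unfold_locales auto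
    have \<nu>_eq: "\<nu> = \<mu>\<^sub>4 - 1"
      using variance_square[of 0] False by (simp add: \<nu>_def)
    have \<gamma>_eq: "\<gamma> a b = gram p A (fst a) (fst b) * gram p A (snd a) (snd b)
        + gram p A (fst a) (snd b) * gram p A (snd a) (fst b)
        + (\<nu> - 2) * (\<Sum>m<p. A (fst a) m * A (snd a) m * A (fst b) m * A (snd b) m)" for a b
      by (simp add: \<gamma>_def U_def gram_def covariance_linear_form_products \<nu>_eq split: prod.split)
    have "f\<^sup>2 = (\<Sum>j<p. \<Sum>k<p. (gram p A j k)\<^sup>2)"
      by (simp add: f_def \<sigma>_def gram_def sum_nonneg)
    then have "f ^ 4 = (\<Sum>j<p. \<Sum>k<p. (gram p A j k)\<^sup>2)\<^sup>2"
      by (metis power_mult num_double numeral_times_numeral)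
    moreover have "0 \<le> \<nu>" by (simp add: \<nu>_def)
    ultimately show ?thesis
      using sum_sq_fourth_order_covariance_ge[of \<nu> p A] by (simp add: \<gamma>_eq)
  qed
qed

end
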